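(* Let $e(x,y)=(\alpha x+p(y),\beta y+\eta)$, $\alpha\beta\ne0$, be an elementary map of $\mathbb C^2$ with $e\circ e=\mathrm{id}$ and $e\neq\mathrm{id}$. Then $e$ belongs to one of the following three classes: (1) $e(x,y)=(-x+p(y),\,y)$ with $p$ any polynomial; (2) $e(x,y)=(x+p(y),\,-y+\eta)$ with $p$ odd around $\eta/2$, i.e. $p(\eta-y)=-p(y)$; (3) $e(x,y)=(-x+p(y),\,-y+\eta)$ with $p$ even around $\eta/2$, i.e. $p(\eta-y)=p(y)$. Conversely every map of these forms is an involution. Moreover, if $p$ has degree $l\ge2$, then $e$ is conjugate by an element of $C_{\mathcal S}(t)$ to a map of the following normal form, respectively: (1) $(x,y)\mapsto(-x+p(y),y)$ with $p(y)=y^l+O(y^{l-2})$ (monic, with vanishing coefficient of $y^{l-1}$); (2) $(x,y)\mapsto(x+p(y),-y)$ with $p$ an odd polynomial with leading coefficient $1$; (3) $(x,y)\mapsto(-x+p(y),-y)$ with $p$ an even polynomial with leading coefficient $1$. These normal forms are unique up to replacing $p(y)$ by $\zeta\,p(y/\zeta)$, where $\zeta$ is any root of unity with $\zeta^{l-1}=1$.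
   Context: $C_{\mathcal S}(t)$ denotes the centralizer of $t(x,y)=(y,x)$ among the affine elementary maps; concretely it consists of the maps $(x,y)\mapsto(ax+b,\,ay+b)$ with $a\ne0$. Two maps $f,g$ are $C_{\mathcal S}(t)$-conjugate if $g=s f s^{-1}$ for some $s\in C_{\mathcal S}(t)$. *)

theory Defs
  imports "HOL-Computational_Algebra.Polynomial" Complex_Main
begin

type_synonym map2 = "complex \<times> complex \<Rightarrow> complex \<times> complex"

definition elementary :: "complex \<Rightarrow> complex poly \<Rightarrow> complex \<Rightarrow> complex \<Rightarrow> map2" where
  "elementary \<alpha> p \<beta> \<eta> = (\<lambda>(x, y). (\<alpha> * x + poly p y, \<beta> * y + \<eta>))"

definition CSt :: "map2 set" where
  "CSt = {s. \<exists>a b. a \<noteq> 0 \<and> s = (\<lambda>(x, y). (a * x + b, a * y + b))}"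

definition CSt_conj :: "map2 \<Rightarrow> map2 \<Rightarrow> bool" where
  "CSt_conj f g \<longleftrightarrow> (\<exists>s \<in> CSt. g = s \<circ> f \<circ> inv s)"

definition in_class :: "nat \<Rightarrow> complex \<Rightarrow> complex poly \<Rightarrow> complex \<Rightarrow> complex \<Rightarrow> bool" where
  "in_class k \<alpha> p \<beta> \<eta> \<longleftrightarrow>
     (if k = 1 then \<alpha> = -1 \<and> \<beta> = 1 \<and> \<eta> = 0
      else if k = 2 then \<alpha> = 1 \<and> \<beta> = -1 \<and> (\<forall>y. poly p (\<eta> - y) = - poly p y)
      else \<alpha> = -1 \<and> \<beta> = -1 \<and> (\<forall>y. poly p (\<eta> - y) = poly p y))"

definition nf_map :: "nat \<Rightarrow> complex poly \<Rightarrow> map2" where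
  "nf_map k q = (if k = 1 then elementary (-1) q 1 0
                 else if k = 2 then elementary 1 q (-1) 0
                 else elementary (-1) q (-1) 0)"

definition normal_poly :: "nat \<Rightarrow> complex poly \<Rightarrow> bool" where
  "normal_poly k q \<longleftrightarrow> lead_coeff q = 1 \<and>
     (if k = 1 then coeff q (degree q - 1) = 0
      else if k = 2 then (\<forall>y. poly q (- y) = - poly q y)
      else (\<forall>y. poly q (- y) = poly q y))"

end

theory Submission
  imports Defs
begin

text \<open>
  Composition of elementary maps is again elementary: the multipliers multiply and the
  polynomial picks up \<open>p \<circ> (\<beta>'y + \<eta>')\<close>. So \<open>e \<circ> e = id\<close> says \<open>\<alpha>\<^sup>2 = \<beta>\<^sup>2 = 1\<close>,
  \<open>(\<beta> + 1) \<eta> = 0\<close> and \<open>\<alpha> p(y) + p(\<beta> y + \<eta>) = 0\<close>; for \<open>\<beta> = -1\<close> the last identity is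
  the (anti)symmetry of \<open>p\<close> about \<open>\<eta>/2\<close>, and \<open>\<alpha> = \<beta> = 1\<close> only leaves the identity.
  Hence the class is determined by \<open>(\<alpha>, \<beta>)\<close> together with involutivity, and it is preserved
  by conjugation with \<open>s(x, y) = (a x + b, a y + b)\<close>, which keeps \<open>\<alpha>, \<beta>\<close> and replaces \<open>p\<close>
  by \<open>a p((y - b)/a) + (1 - \<alpha>) b\<close> and \<open>\<eta>\<close> by \<open>a \<eta> + (1 - \<beta>) b\<close>. Taking
  \<open>a\<^bsup>l-1\<^esup>\<close> equal to the leading coefficient makes \<open>p\<close> monic, and \<open>b\<close> either moves \<open>\<eta>\<close>
  to \<open>0\<close> (classes 2, 3) or removes the \<open>y\<^bsup>l-1\<^esup>\<close> term (class 1). Between two normal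
  forms the same normalisations force \<open>b = 0\<close> and \<open>a\<^bsup>l-1\<^esup> = 1\<close>.
\<close>

lemma ex_complex_nth_root:
  assumes "n > 0"
  shows "\<exists>a::complex. a ^ n = c"
proof (cases "c = 0")
  case False
  have "card {a::complex. a ^ n = c} > 0"
    using card_nth_roots[OF False assms] assms by simp
  then show ?thesis
    unfolding card_gt_0_iff by blast
qed (use assms in auto)

lemma coeff_pcompose_shift_subleading:
  fixes p :: "'a::idom poly"
  assumes "degree p \<ge> 1"
  shows "coeff (p \<circ>\<^sub>p [:c, 1:]) (degree p - 1) =
           coeff p (degree p - 1) + of_nat (degree p) * c * lead_coeff p"
  using assms
proof (induction p)
  case 0
  then show ?case by simp
next
  case (pCons a p)
  show ?case
  proof (cases "degree p = 0")
    case True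
    then obtain d where "p = [:d:]" by (metis degree_eq_zeroE)
    then show ?thesis using pCons by (cases "d = 0") (auto simp: pcompose_pCons)
  next
    case False
    then obtain m where m: "degree p = Suc m" by (cases "degree p") auto
    have "coeff (p \<circ>\<^sub>p [:c, 1:]) (degree p) = lead_coeff p"
      using lead_coeff_comp[of "[:c, 1:]" p] by (simp add: degree_pcompose)
    moreover have "degree (pCons a p) = Suc (degree p)"
      using False by (cases "p = 0") auto
    ultimately show ?thesis
      using pCons.IH False m by (simp add: pcompose_pCons coeff_pCons algebra_simps)
  qed
qed

definition CSt_conj_poly :: "complex \<Rightarrow> complex \<Rightarrow> complex \<Rightarrow> complex poly \<Rightarrow> complex poly" where
  "CSt_conj_poly a b \<alpha> p = smult a (p \<circ>\<^sub>p [:-b/a, 1/a:]) + [:(1 - \<alpha>) * b:]"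

lemma poly_CSt_conj_poly:
  "a \<noteq> 0 \<Longrightarrow> poly (CSt_conj_poly a b \<alpha> p) y = a * poly p ((y - b) / a) + (1 - \<alpha>) * b"
  by (simp add: CSt_conj_poly_def poly_pcompose diff_divide_distrib)

lemma CSt_conj_poly_coeffs:
  assumes a: "a \<noteq> 0" and l: "degree p = l" "l \<ge> 1"
  shows degree_CSt_conj_poly: "degree (CSt_conj_poly a b \<alpha> p) = l"
    and lead_coeff_CSt_conj_poly: "lead_coeff (CSt_conj_poly a b \<alpha> p) = lead_coeff p / a ^ (l - 1)"
    and coeff_CSt_conj_poly_subleading: "l \<ge> 2 \<Longrightarrow> coeff (CSt_conj_poly a b \<alpha> p) (l - 1) =
           (coeff p (l - 1) - of_nat l * (b / a) * lead_coeff p) / a ^ (l - 2)"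
proof -
  let ?r = "p \<circ>\<^sub>p [:-b/a, 1:]"
  have "[:-b/a, 1:] \<circ>\<^sub>p [:0, 1/a:] = [:-b/a, 1/a:]"
    by (simp add: pcompose_pCons)
  then have split: "CSt_conj_poly a b \<alpha> p = smult a (?r \<circ>\<^sub>p [:0, 1/a:]) + [:(1 - \<alpha>) * b:]"
    unfolding CSt_conj_poly_def by (metis pcompose_assoc)
  have degree_r: "degree ?r = l" and lead_coeff_r: "lead_coeff ?r = lead_coeff p"
    using l lead_coeff_comp[of "[:-b/a, 1:]" p] by (simp_all add: degree_pcompose)
  have coeff: "coeff (CSt_conj_poly a b \<alpha> p) n = a * ((1/a) ^ n * coeff ?r n)" if "n \<ge> 1" for n
    using that unfolding split by (cases n) (simp_all add: coeff_pcompose_linear)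
  show degree: "degree (CSt_conj_poly a b \<alpha> p) = l"
    unfolding split using a l degree_r by (subst degree_add_eq_left) (auto simp: degree_pcompose)
  show "lead_coeff (CSt_conj_poly a b \<alpha> p) = lead_coeff p / a ^ (l - 1)"
    unfolding degree using coeff[of l] l a lead_coeff_r degree_r
    by (simp add: power_diff power_one_over)
  assume "l \<ge> 2"
  moreover have "a ^ l = a\<^sup>2 * a ^ (l - 2)"
    using \<open>l \<ge> 2\<close> by (metis le_add_diff_inverse power_add)
  ultimately show "coeff (CSt_conj_poly a b \<alpha> p) (l - 1) =
               (coeff p (l - 1) - of_nat l * (b / a) * lead_coeff p) / a ^ (l - 2)"
    using coeff[of "l - 1"] l a coeff_pcompose_shift_subleading[of p "-b/a"]
    by (simp add: power_one_over power_diff power2_eq_square)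
qed

lemma elementary_eq_iff:
  "elementary \<alpha> p \<beta> \<eta> = elementary \<alpha>' p' \<beta>' \<eta>' \<longleftrightarrow> \<alpha> = \<alpha>' \<and> p = p' \<and> \<beta> = \<beta>' \<and> \<eta> = \<eta>'"
proof
  assume h: "elementary \<alpha> p \<beta> \<eta> = elementary \<alpha>' p' \<beta>' \<eta>'"
  have f: "\<alpha> * x + poly p y = \<alpha>' * x + poly p' y \<and> \<beta> * y + \<eta> = \<beta>' * y + \<eta>'" for x y
    using fun_cong[OF h, of "(x, y)"] by (simp add: elementary_def)
  have "\<eta> = \<eta>'" using f[of 0 0] by simp
  moreover have "\<beta> = \<beta>'" using f[of 0 1] \<open>\<eta> = \<eta>'\<close> by simp
  moreover have "poly p = poly p'" using f[of 0] by auto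
  moreover have "\<alpha> = \<alpha>'" using f[of 1 0] \<open>poly p = poly p'\<close> by simp
  ultimately show "\<alpha> = \<alpha>' \<and> p = p' \<and> \<beta> = \<beta>' \<and> \<eta> = \<eta>'"
    using poly_eq_poly_eq_iff by blast
qed simp

lemma id_eq_elementary: "id = elementary 1 0 1 0"
  by (simp add: elementary_def fun_eq_iff)

lemma elementary_comp:
  "elementary \<alpha> p \<beta> \<eta> \<circ> elementary \<alpha>' p' \<beta>' \<eta>' =
     elementary (\<alpha> * \<alpha>') (smult \<alpha> p' + p \<circ>\<^sub>p [:\<eta>', \<beta>':]) (\<beta> * \<beta>') (\<beta> * \<eta>' + \<eta>)"
  by (simp add: elementary_def fun_eq_iff poly_pcompose algebra_simps)

lemma elementary_involution_iff:
  "elementary \<alpha> p \<beta> \<eta> \<circ> elementary \<alpha> p \<beta> \<eta> = id \<longleftrightarrow>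
     \<alpha> * \<alpha> = 1 \<and> \<beta> * \<beta> = 1 \<and> \<beta> * \<eta> + \<eta> = 0 \<and> smult \<alpha> p + p \<circ>\<^sub>p [:\<eta>, \<beta>:] = 0"
  by (auto simp: elementary_comp id_eq_elementary elementary_eq_iff)

definition nf_alpha :: "nat \<Rightarrow> complex" where
  "nf_alpha k = (if k = 2 then 1 else -1)"

definition nf_beta :: "nat \<Rightarrow> complex" where
  "nf_beta k = (if k = 1 then 1 else -1)"

lemma in_class_iff:
  assumes "k \<in> {1, 2, 3}"
  shows "in_class k \<alpha> p \<beta> \<eta> \<longleftrightarrow>
           \<alpha> = nf_alpha k \<and> \<beta> = nf_beta k \<and> elementary \<alpha> p \<beta> \<eta> \<circ> elementary \<alpha> p \<beta> \<eta> = id"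
proof -
  have reflect: "smult c p + p \<circ>\<^sub>p [:\<eta>, -1:] = 0 \<longleftrightarrow> (\<forall>y. poly p (\<eta> - y) = - c * poly p y)" for c
    by (simp add: poly_eq_poly_eq_iff[symmetric] fun_eq_iff poly_pcompose eq_neg_iff_add_eq_0 add.commute)
  show ?thesis
    using assms reflect[of 1] reflect[of "-1"]
    by (auto simp: in_class_def nf_alpha_def nf_beta_def elementary_involution_iff)
qed

lemma involution_in_class:
  assumes inv: "elementary \<alpha> p \<beta> \<eta> \<circ> elementary \<alpha> p \<beta> \<eta> = id"
    and ne: "elementary \<alpha> p \<beta> \<eta> \<noteq> id"
  shows "\<exists>k \<in> {1, 2, 3}. in_class k \<alpha> p \<beta> \<eta>"
proof -
  have "\<alpha> * \<alpha> = 1" "\<beta> * \<beta> = 1" "\<beta> * \<eta> + \<eta> = 0" "smult \<alpha> p + p \<circ>\<^sub>p [:\<eta>, \<beta>:] = 0"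
    using inv by (simp_all add: elementary_involution_iff)
  then have "\<alpha> = 1 \<or> \<alpha> = -1" "\<beta> = 1 \<or> \<beta> = -1"
    using power2_eq_1_iff by (auto simp: power2_eq_square)
  moreover have "\<not> (\<alpha> = 1 \<and> \<beta> = 1)"
  proof
    assume "\<alpha> = 1 \<and> \<beta> = 1"
    with \<open>\<beta> * \<eta> + \<eta> = 0\<close> \<open>smult \<alpha> p + p \<circ>\<^sub>p [:\<eta>, \<beta>:] = 0\<close> have "\<eta> = 0" "p = 0"
      by (simp_all flip: smult_add_left)
    with \<open>\<alpha> = 1 \<and> \<beta> = 1\<close> ne show False by (simp add: id_eq_elementary)
  qed
  ultimately have "\<exists>k \<in> {1, 2, 3}. \<alpha> = nf_alpha k \<and> \<beta> = nf_beta k"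
    by (auto simp: nf_alpha_def nf_beta_def)
  then show ?thesis using inv in_class_iff by blast
qed

definition diag_affine :: "complex \<Rightarrow> complex \<Rightarrow> map2" where
  "diag_affine a b = (\<lambda>(x, y). (a * x + b, a * y + b))"

lemma CSt_eq: "CSt = {diag_affine a b | a b. a \<noteq> 0}"
  by (auto simp: CSt_def diag_affine_def)

lemma inv_diag_affine: "a \<noteq> 0 \<Longrightarrow> inv (diag_affine a b) = diag_affine (1/a) (-b/a)"
  by (rule inv_unique_comp) (auto simp: diag_affine_def fun_eq_iff field_simps)

lemma bij_diag_affine: "a \<noteq> 0 \<Longrightarrow> bij (diag_affine a b)"
  by (rule o_bij[of "diag_affine (1/a) (-b/a)"]) (auto simp: diag_affine_def fun_eq_iff field_simps)

lemma diag_affine_conj_elementary: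
  assumes "a \<noteq> 0"
  shows "diag_affine a b \<circ> elementary \<alpha> p \<beta> \<eta> \<circ> inv (diag_affine a b) =
           elementary \<alpha> (CSt_conj_poly a b \<alpha> p) \<beta> (a * \<eta> + (1 - \<beta>) * b)"
  unfolding inv_diag_affine[OF assms] using assms
  by (simp add: diag_affine_def elementary_def fun_eq_iff poly_CSt_conj_poly field_simps)

lemma CSt_conj_elementary_iff:
  "CSt_conj (elementary \<alpha> p \<beta> \<eta>) g \<longleftrightarrow>
     (\<exists>a b. a \<noteq> 0 \<and> g = elementary \<alpha> (CSt_conj_poly a b \<alpha> p) \<beta> (a * \<eta> + (1 - \<beta>) * b))"
proof -
  have "CSt_conj (elementary \<alpha> p \<beta> \<eta>) g \<longleftrightarrow>
          (\<exists>a b. a \<noteq> 0 \<and> g = diag_affine a b \<circ> elementary \<alpha> p \<beta> \<eta> \<circ> inv (diag_affine a b))"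
    unfolding CSt_conj_def CSt_eq by blast
  then show ?thesis
    by (simp add: diag_affine_conj_elementary cong: conj_cong)
qed

lemma CSt_conj_involution:
  assumes "CSt_conj f g" and "f \<circ> f = id"
  shows "g \<circ> g = id"
proof -
  obtain s where "bij s" and g: "g = s \<circ> f \<circ> inv s"
    using assms(1) unfolding CSt_conj_def CSt_eq by (blast intro: bij_diag_affine)
  then have "inv s \<circ> s = id" "s \<circ> inv s = id"
    by (simp_all add: bij_is_inj bij_is_surj flip: surj_iff)
  then have "g \<circ> g = s \<circ> (f \<circ> f) \<circ> inv s"
    unfolding g by (metis comp_assoc comp_id)
  then show ?thesis
    using assms(2) \<open>s \<circ> inv s = id\<close> by simp
qed

lemma in_class_CSt_conj_poly:
  assumes "k \<in> {1, 2, 3}" and "a \<noteq> 0" and "in_class k \<alpha> p \<beta> \<eta>"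
  shows "in_class k \<alpha> (CSt_conj_poly a b \<alpha> p) \<beta> (a * \<eta> + (1 - \<beta>) * b)"
proof -
  have "CSt_conj (elementary \<alpha> p \<beta> \<eta>) (elementary \<alpha> (CSt_conj_poly a b \<alpha> p) \<beta> (a * \<eta> + (1 - \<beta>) * b))"
    using assms(2) by (auto simp: CSt_conj_elementary_iff)
  then show ?thesis
    using assms(1,3) CSt_conj_involution by (auto simp: in_class_iff)
qed

lemma nf_map_eq: "nf_map k q = elementary (nf_alpha k) q (nf_beta k) 0"
  by (simp add: nf_map_def nf_alpha_def nf_beta_def)

lemma normal_poly_iff:
  assumes "k \<in> {1, 2, 3}"
  shows "normal_poly k q \<longleftrightarrow> lead_coeff q = 1 \<and> (k = 1 \<longrightarrow> coeff q (degree q - 1) = 0) \<and>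
           in_class k (nf_alpha k) q (nf_beta k) 0"
  using assms by (auto simp: normal_poly_def in_class_def nf_alpha_def nf_beta_def)

lemma exists_normal_form:
  assumes k: "k \<in> {1, 2, 3}" and c: "in_class k \<alpha> p \<beta> \<eta>" and l: "degree p = l" "l \<ge> 2"
  shows "\<exists>q. degree q = l \<and> normal_poly k q \<and> CSt_conj (elementary \<alpha> p \<beta> \<eta>) (nf_map k q)"
proof -
  have \<alpha>\<beta>: "\<alpha> = nf_alpha k" "\<beta> = nf_beta k"
    using c in_class_iff[OF k] by simp_all
  have lc: "lead_coeff p \<noteq> 0" using l by auto
  obtain a where a: "a ^ (l - 1) = lead_coeff p"
    using ex_complex_nth_root[of "l - 1" "lead_coeff p"] l by auto
  have a0: "a \<noteq> 0" using a lc l by (auto simp: power_0_left)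
  txt \<open>In class 1 we have \<open>\<beta> = 1\<close> and \<open>\<eta> = 0\<close>, so the first condition holds for every \<open>b\<close>.\<close>
  obtain b where \<eta>: "a * \<eta> + (1 - \<beta>) * b = 0"
    and sub: "k = 1 \<longrightarrow> coeff (CSt_conj_poly a b \<alpha> p) (l - 1) = 0"
  proof (cases "k = 1")
    case True
    define b where "b = a * coeff p (l - 1) / (of_nat l * lead_coeff p)"
    have "coeff (CSt_conj_poly a b \<alpha> p) (l - 1) = 0"
      using coeff_CSt_conj_poly_subleading[OF a0 l(1)] l a0 lc by (simp add: b_def)
    moreover have "\<eta> = 0" "\<beta> = 1"
      using c True by (simp_all add: in_class_def)
    ultimately show thesis
      using that[of b] by simp
  next
    case False
    then show thesis
      using that[of "- a * \<eta> / 2"] \<alpha>\<beta> by (simp add: nf_beta_def)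
  qed
  define q where "q = CSt_conj_poly a b \<alpha> p"
  have "degree q = l" "lead_coeff q = 1"
    using degree_CSt_conj_poly[OF a0 l(1)] lead_coeff_CSt_conj_poly[OF a0 l(1)] a lc l
    by (simp_all add: q_def)
  moreover have "in_class k \<alpha> q \<beta> 0"
    using in_class_CSt_conj_poly[OF k a0 c, of b] \<eta> by (simp add: q_def)
  moreover have "k = 1 \<longrightarrow> coeff q (degree q - 1) = 0"
    using sub \<open>degree q = l\<close> by (simp flip: q_def)
  ultimately have "normal_poly k q"
    using normal_poly_iff[OF k] \<alpha>\<beta> by simp
  moreover have "CSt_conj (elementary \<alpha> p \<beta> \<eta>) (nf_map k q)"
    unfolding nf_map_eq CSt_conj_elementary_iff q_def using a0 \<eta> \<alpha>\<beta>
    by (intro exI[of _ a] exI[of _ b]) simp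
  ultimately show ?thesis
    using \<open>degree q = l\<close> by blast
qed

lemma CSt_conj_nf_map_iff:
  assumes k: "k \<in> {1, 2, 3}" and j: "j \<in> {1, 2, 3}"
    and np: "normal_poly k p" and nq: "normal_poly j q" and l: "degree p \<ge> 2"
  shows "CSt_conj (nf_map k p) (nf_map j q) \<longleftrightarrow>
           k = j \<and> (\<exists>\<zeta>. \<zeta> ^ (degree p - 1) = 1 \<and> (\<forall>y. poly q y = \<zeta> * poly p (y / \<zeta>)))"
proof
  assume "CSt_conj (nf_map k p) (nf_map j q)"
  then obtain a b where a0: "a \<noteq> 0" and kj: "nf_alpha j = nf_alpha k" "nf_beta j = nf_beta k"
    and q: "q = CSt_conj_poly a b (nf_alpha k) p" and \<eta>: "(1 - nf_beta k) * b = 0"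
    by (auto simp: nf_map_eq CSt_conj_elementary_iff elementary_eq_iff)
  have "k = j"
    using k j kj by (auto simp: nf_alpha_def nf_beta_def)
  have "lead_coeff p = 1" "lead_coeff q = 1"
    using np nq by (simp_all add: normal_poly_def)
  have "degree q = degree p"
    using a0 l by (simp add: q degree_CSt_conj_poly)
  have "a ^ (degree p - 1) = 1"
    using lead_coeff_CSt_conj_poly[OF a0, of p "degree p" b "nf_alpha k"] l
      \<open>lead_coeff p = 1\<close> \<open>lead_coeff q = 1\<close> by (simp add: q)
  moreover have "b = 0"
  proof (cases "k = 1")
    case True
    then have "coeff p (degree p - 1) = 0" "coeff q (degree p - 1) = 0"
      using np nq \<open>k = j\<close> \<open>degree q = degree p\<close> by (simp_all add: normal_poly_def)
    then show ?thesis
      using coeff_CSt_conj_poly_subleading[OF a0, of p "degree p" b "nf_alpha k"] l a0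
        \<open>lead_coeff p = 1\<close> by (simp add: q)
  next
    case False
    then show ?thesis
      using \<eta> by (simp add: nf_beta_def)
  qed
  then have "poly q y = a * poly p (y / a)" for y
    using a0 by (simp add: q poly_CSt_conj_poly)
  ultimately show "k = j \<and> (\<exists>\<zeta>. \<zeta> ^ (degree p - 1) = 1 \<and> (\<forall>y. poly q y = \<zeta> * poly p (y / \<zeta>)))"
    using \<open>k = j\<close> by blast
next
  assume "k = j \<and> (\<exists>\<zeta>. \<zeta> ^ (degree p - 1) = 1 \<and> (\<forall>y. poly q y = \<zeta> * poly p (y / \<zeta>)))"
  then obtain \<zeta> where "k = j" and \<zeta>: "\<zeta> ^ (degree p - 1) = 1" and pq: "\<And>y. poly q y = \<zeta> * poly p (y / \<zeta>)"
    by blast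
  have "\<zeta> \<noteq> 0"
    using \<zeta> l by (auto simp: power_0_left)
  then have "q = CSt_conj_poly \<zeta> 0 (nf_alpha k) p"
    using pq by (intro poly_ext) (simp add: poly_CSt_conj_poly)
  then show "CSt_conj (nf_map k p) (nf_map j q)"
    unfolding nf_map_eq CSt_conj_elementary_iff using \<open>\<zeta> \<noteq> 0\<close> \<open>k = j\<close>
    by (intro exI[of _ \<zeta>] exI[of _ 0]) simp
qed

theorem proposition3p2:
  shows
   "(\<forall>\<alpha> \<beta> \<eta> p. \<alpha> \<noteq> 0 \<and> \<beta> \<noteq> 0 \<and>
        elementary \<alpha> p \<beta> \<eta> \<circ> elementary \<alpha> p \<beta> \<eta> = id \<and> elementary \<alpha> p \<beta> \<eta> \<noteq> id
      \<longrightarrow> in_class 1 \<alpha> p \<beta> \<eta> \<or> in_class 2 \<alpha> p \<beta> \<eta> \<or> in_class 3 \<alpha> p \<beta> \<eta>)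
    \<and> (\<forall>k \<in> {1, 2, 3}. \<forall>\<alpha> \<beta> \<eta> p. in_class k \<alpha> p \<beta> \<eta> \<longrightarrow>
        elementary \<alpha> p \<beta> \<eta> \<circ> elementary \<alpha> p \<beta> \<eta> = id)
    \<and> (\<forall>k \<in> {1, 2, 3}. \<forall>\<alpha> \<beta> \<eta> p l. in_class k \<alpha> p \<beta> \<eta> \<and> degree p = l \<and> l \<ge> 2 \<longrightarrow>
        (\<exists>q. degree q = l \<and> normal_poly k q \<and> CSt_conj (elementary \<alpha> p \<beta> \<eta>) (nf_map k q)))
    \<and> (\<forall>k \<in> {1, 2, 3}. \<forall>j \<in> {1, 2, 3}. \<forall>p q.
        normal_poly k p \<and> normal_poly j q \<and> degree p \<ge> 2 \<longrightarrow>
        (CSt_conj (nf_map k p) (nf_map j q) \<longleftrightarrow>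
          k = j \<and> (\<exists>\<zeta>::complex. \<zeta> ^ (degree p - 1) = 1 \<and> (\<forall>y. poly q y = \<zeta> * poly p (y / \<zeta>)))))"
proof (intro conjI ballI allI impI)
  fix \<alpha> \<beta> \<eta> p
  assume "\<alpha> \<noteq> 0 \<and> \<beta> \<noteq> 0 \<and>
    elementary \<alpha> p \<beta> \<eta> \<circ> elementary \<alpha> p \<beta> \<eta> = id \<and> elementary \<alpha> p \<beta> \<eta> \<noteq> id"
  then show "in_class 1 \<alpha> p \<beta> \<eta> \<or> in_class 2 \<alpha> p \<beta> \<eta> \<or> in_class 3 \<alpha> p \<beta> \<eta>"
    using involution_in_class by blast
next
  fix k \<alpha> \<beta> \<eta> p
  assume "k \<in> {1, 2, 3}" and "in_class k \<alpha> p \<beta> \<eta>"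
  then show "elementary \<alpha> p \<beta> \<eta> \<circ> elementary \<alpha> p \<beta> \<eta> = id"
    using in_class_iff by blast
next
  fix k \<alpha> \<beta> \<eta> p l
  assume "k \<in> {1, 2, 3}" and "in_class k \<alpha> p \<beta> \<eta> \<and> degree p = l \<and> l \<ge> 2"
  then show "\<exists>q. degree q = l \<and> normal_poly k q \<and> CSt_conj (elementary \<alpha> p \<beta> \<eta>) (nf_map k q)"
    using exists_normal_form by blast
qed (use CSt_conj_nf_map_iff in blast)

end
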